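(* Let \(n\ge1\), \(\sigma\) a norm on \(\mathbb{R}^n\), \(V=(\mathbb{R}^n,\|\cdot\|)\) a normed space and \(I\colon\mathbb{R}^n\to V\) the identity map. For every \(\theta\in L^1(\mathbb{R}^n)\), letting \(T=I_\#[\![\theta]\!]\), i.e. \(T(f,\pi)=\int_{\mathbb{R}^n}\theta\cdot(f\circ I)\cdot\det D(\pi\circ I)\,d\mathscr{L}^n\) for \((f,\pi)\in\mathcal{D}^n(V)\), we have \(\|T\|_{\mathbf{L}^\sigma}=|\theta|\,\mu^\sigma_V\), i.e. \(\|T\|_{\mathbf{L}^\sigma}(A)=\int_{I^{-1}(A)}|\theta(p)|\,J^\sigma(\|\cdot\|)\,dp\) for Borel \(A\subset V\).
   Context: \(\mathcal{D}^n(V)\): pairs \((f,\pi)\), \(f\colon V\to\mathbb{R}\) bounded Lipschitz, \(\pi\colon V\to\mathbb{R}^n\) Lipschitz. \(\mathbf{L}^\sigma(\pi)=\mathrm{Lip}(J\circ\pi)\) with \(J\colon\mathbb{R}^n\to(\mathbb{R}^n,\sigma)\) the identity. For a seminorm \(\mathbf{L}\) on \(\mathrm{Lip}(V,\mathbb{R}^n)\) and an \(\mathbf{L}\)-current \(T\) (multilinear, with the continuity, locality and finite mass axioms), \(\|T\|_{\mathbf{L}}\) is the minimal finite Borel measure \(\mu\) with \(|T(f,\pi)|\le\mathbf{L}(\pi)^n\int|f|\,d\mu\) for all \((f,\pi)\in\mathcal{D}^n(V)\). \(J^\sigma(s)=\sup_F\mathscr{L}^n(B_\sigma)/\mathscr{L}^n(F^{-1}(B_\sigma))\),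 sup over linear \(F\) with \(F^{-1}(B_\sigma)\) containing the unit ball of the norm \(s\). \(\mu^\sigma_V(A)=J^\sigma(\|\cdot\|)\mathscr{L}^n(I^{-1}(A))\) is the Finsler volume of \(V\). *)

theory Defs
  imports "HOL-Analysis.Analysis"
begin

text \<open>Points of V = (R^n, N) are represented by the type real^'n; the norm of V is an
  explicit function N, and sigma is another norm on R^n. The identity I is implicit.\<close>

definition is_norm_fn :: "(real^'n \<Rightarrow> real) \<Rightarrow> bool" where
  "is_norm_fn N \<longleftrightarrow> (\<forall>x. N x = 0 \<longleftrightarrow> x = 0) \<and> (\<forall>x y. N (x + y) \<le> N x + N y)
     \<and> (\<forall>c x. N (c *\<^sub>R x) = \<bar>c\<bar> * N x)"

definition in_Dn :: "(real^'n \<Rightarrow> real) \<Rightarrow> (real^'n \<Rightarrow> real) \<Rightarrow> (real^'n \<Rightarrow> real^'n) \<Rightarrow> bool" where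
  "in_Dn N f \<pi> \<longleftrightarrow> (\<exists>B. \<forall>x. \<bar>f x\<bar> \<le> B) \<and> (\<exists>L. \<forall>x y. \<bar>f x - f y\<bar> \<le> L * N (x - y))
     \<and> (\<exists>L. \<forall>x y. norm (\<pi> x - \<pi> y) \<le> L * N (x - y))"

definition L_sigma :: "(real^'n \<Rightarrow> real) \<Rightarrow> (real^'n \<Rightarrow> real) \<Rightarrow> (real^'n \<Rightarrow> real^'n) \<Rightarrow> real" where
  "L_sigma \<sigma> N \<pi> = Sup {\<sigma> (\<pi> x - \<pi> y) / N (x - y) | x y. x \<noteq> y}"

text \<open>Jacobian determinant det D pi (x), set to 0 where pi is not differentiable (a null set by Rademacher).\<close>
definition jac_det :: "(real^'n \<Rightarrow> real^'n) \<Rightarrow> real^'n \<Rightarrow> real" where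
  "jac_det \<pi> x = (if \<pi> differentiable (at x) then det (matrix (frechet_derivative \<pi> (at x))) else 0)"

definition push_current :: "(real^'n \<Rightarrow> real) \<Rightarrow> (real^'n \<Rightarrow> real) \<Rightarrow> (real^'n \<Rightarrow> real^'n) \<Rightarrow> real" where
  "push_current \<theta> f \<pi> = (\<integral>x. \<theta> x * f x * jac_det \<pi> x \<partial>lebesgue)"

definition mass_bound :: "(real^'n \<Rightarrow> real) \<Rightarrow> ((real^'n \<Rightarrow> real^'n) \<Rightarrow> real)
    \<Rightarrow> ((real^'n \<Rightarrow> real) \<Rightarrow> (real^'n \<Rightarrow> real^'n) \<Rightarrow> real) \<Rightarrow> (real^'n) measure \<Rightarrow> bool" where
  "mass_bound N L T \<mu> \<longleftrightarrow> sets \<mu> = sets borel \<and> finite_measure \<mu> \<and>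
     (\<forall>f \<pi>. in_Dn N f \<pi> \<longrightarrow> \<bar>T f \<pi>\<bar> \<le> L \<pi> ^ CARD('n) * (\<integral>x. \<bar>f x\<bar> \<partial>\<mu>))"

definition is_mass :: "(real^'n \<Rightarrow> real) \<Rightarrow> ((real^'n \<Rightarrow> real^'n) \<Rightarrow> real)
    \<Rightarrow> ((real^'n \<Rightarrow> real) \<Rightarrow> (real^'n \<Rightarrow> real^'n) \<Rightarrow> real) \<Rightarrow> (real^'n) measure \<Rightarrow> bool" where
  "is_mass N L T \<mu> \<longleftrightarrow> mass_bound N L T \<mu> \<and>
     (\<forall>\<nu>. mass_bound N L T \<nu> \<longrightarrow> (\<forall>A\<in>sets borel. emeasure \<mu> A \<le> emeasure \<nu> A))"

definition J_sigma :: "(real^'n \<Rightarrow> real) \<Rightarrow> (real^'n \<Rightarrow> real) \<Rightarrow> real" where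
  "J_sigma \<sigma> s = Sup {measure lebesgue {y. \<sigma> y \<le> 1} / measure lebesgue (F -` {y. \<sigma> y \<le> 1}) | F.
      linear F \<and> {x. s x \<le> 1} \<subseteq> F -` {y. \<sigma> y \<le> 1}}"

end

theory Submission
  imports Defs
begin

(* For a linear map F with sigma (F v) <= N v for all v, the volume ratio in the definition of
   J_sigma equals |det F|; for singular F the preimage of the sigma-ball contains a cylinder and
   has infinite measure, so the ratio is 0. Hence J_sigma is the supremum of |det F| over such
   contractions F.

   Upper bound: where pi is differentiable, its derivative divided by L = L_sigma(pi) is such a
   contraction, so |det D pi| <= L^n J_sigma and |T(f, pi)| <= L^n * integral of |f| |theta| J_sigma.

   Minimality: if nu is another admissible measure, testing with linear contractions F (for which
   L_sigma(F) <= 1 and T(f, F) = det F * integral of theta f) gives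
   J_sigma |integral of theta f| <= integral of |f| d nu for bounded Lipschitz f. Lipschitz cutoffs
   between compact and open sets (inner and outer regularity) approximate indicators, so
   J_sigma |integral over B of theta| <= nu(B) for Borel B; splitting A by the sign of theta gives
   J_sigma * integral over A of |theta| <= nu(A). *)

section \<open>Lebesgue measure of linear images\<close>

text \<open>The library's \<open>measure_linear_image\<close> is stated only for wellordered index types;
  the elementary-matrix induction below gives it for an arbitrary finite index type.\<close>

lemma coordinate_swap_image_cbox:
  fixes a b :: "real^'n" and m n :: 'n
  defines "h \<equiv> \<lambda>x::real^'n. \<chi> i. x $ Transposition.transpose m n i"
  shows "h ` cbox a b = cbox (h a) (h b)"
proof -
  have inv: "h (h x) = x" for x
    by (simp add: h_def vec_eq_iff)
  have reindex: "(\<forall>i. Q i) \<longleftrightarrow> (\<forall>j. Q (Transposition.transpose m n j))" for Q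
    by (metis transpose_involutory)
  have mem: "h x \<in> cbox a b \<longleftrightarrow> x \<in> cbox (h a) (h b)" for x
    unfolding mem_box_cart h_def by (subst reindex) simp
  show ?thesis
  proof (intro set_eqI iffI)
    fix x
    assume "x \<in> h ` cbox a b"
    then obtain y where "y \<in> cbox a b" "x = h y"
      by blast
    with mem [of x] inv show "x \<in> cbox (h a) (h b)"
      by simp
  next
    fix x
    assume "x \<in> cbox (h a) (h b)"
    then have "h (h x) \<in> h ` cbox a b"
      using mem by blast
    then show "x \<in> h ` cbox a b"
      by (simp only: inv)
  qed
qed

lemma measure_coordinate_swap_image:
  fixes S :: "(real^'n) set" and m n :: 'n
  assumes "S \<in> lmeasurable"
  defines "h \<equiv> \<lambda>x::real^'n. \<chi> i. x $ Transposition.transpose m n i"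
  shows "h ` S \<in> lmeasurable \<and> measure lebesgue (h ` S) = measure lebesgue S"
proof -
  have lin: "linear h"
    unfolding h_def by (rule linearI) (simp_all add: plus_vec_def scaleR_vec_def)
  have box_measure: "measure lebesgue (h ` cbox a b) = 1 * measure lebesgue (cbox a b)" for a b
  proof (cases "cbox a b = {}")
    case False
    have box: "h ` cbox a b = cbox (h a) (h b)"
      unfolding h_def by (rule coordinate_swap_image_cbox)
    with False have "cbox (h a) (h b) \<noteq> {}"
      by (metis image_is_empty)
    then have "measure lebesgue (h ` cbox a b) = (\<Prod>i\<in>UNIV. h b $ i - h a $ i)"
      unfolding box by (simp add: content_cbox_cart)
    also have "\<dots> = (\<Prod>i\<in>UNIV. (b - a) $ Transposition.transpose m n i)"
      by (simp add: h_def)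
    also have "\<dots> = (\<Prod>i\<in>UNIV. (b - a) $ i)"
      by (rule prod.permute [OF permutes_swap_id [of m UNIV n], of "\<lambda>i. (b - a) $ i",
            unfolded o_def, symmetric]) simp_all
    finally show ?thesis
      using False by (simp add: content_cbox_cart)
  qed simp
  show ?thesis
    using measure_linear_sufficient [OF lin assms(1) box_measure] by simp
qed

lemma measure_shear_image:
  fixes S :: "(real^'n) set"
  assumes "m \<noteq> n" "S \<in> lmeasurable"
  defines "h \<equiv> \<lambda>x::real^'n. \<chi> i. if i = m then x $ m + x $ n else x $ i"
  shows "h ` S \<in> lmeasurable \<and> measure lebesgue (h ` S) = measure lebesgue S"
proof -
  have lin: "linear h"
    unfolding h_def by (rule linearI) (auto simp: algebra_simps vec_eq_iff)
  have box_measure: "measure lebesgue (h ` cbox a b) = 1 * measure lebesgue (cbox a b)" for a b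
  proof (cases "cbox a b = {}")
    case False
    \<comment> \<open>\<open>measure_shear_interval\<close> needs \<open>0 \<le> a $ n\<close>, so translate the box first\<close>
    define v :: "real^'n" where "v = axis n (a $ n)"
    have box: "cbox a b = (+) v ` cbox (a - v) (b - v)"
      using cbox_translation [of v "a - v" "b - v"] by simp
    have "h ` cbox a b = (+) (h v) ` h ` cbox (a - v) (b - v)"
      unfolding box image_comp using linear_add [OF lin] by (simp add: o_def)
    then have "measure lebesgue (h ` cbox a b) = measure lebesgue (h ` cbox (a - v) (b - v))"
      by (simp add: measure_translation)
    also have "\<dots> = measure lebesgue (cbox (a - v) (b - v))"
      unfolding h_def using \<open>m \<noteq> n\<close> False box
      by (intro measure_shear_interval) (auto simp: v_def)
    also have "\<dots> = measure lebesgue (cbox a b)"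
      unfolding box by (simp add: measure_translation)
    finally show ?thesis
      by simp
  qed simp
  show ?thesis
    using measure_linear_sufficient [OF lin \<open>S \<in> lmeasurable\<close> box_measure] by simp
qed

lemma abs_det_coordinate_swap:
  fixes m n :: "'n::finite"
  shows "\<bar>det (matrix (\<lambda>x::real^'n. \<chi> i. x $ Transposition.transpose m n i))\<bar> = 1"
proof -
  have "(\<chi> i j. if Transposition.transpose m n i = j then 1 else 0) =
      (\<chi> i j. if j = Transposition.transpose m n i then 1 else (0::real))"
    by (auto intro!: Cart_lambda_cong)
  then have "matrix (\<lambda>x::real^'n. \<chi> i. x $ Transposition.transpose m n i) =
      transpose (\<chi> i j. mat 1 $ i $ Transposition.transpose m n j)"
    by (auto simp: matrix_eq transpose_def axis_def mat_def matrix_def)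
  then show ?thesis
    by (simp add: det_permute_columns permutes_swap_id sign_swap_id abs_mult)
qed

lemma det_shear:
  fixes m n :: "'n::finite"
  assumes "m \<noteq> n"
  shows "det (matrix (\<lambda>x::real^'n. \<chi> i. if i = m then x $ m + x $ n else x $ i)) = 1"
proof -
  have "matrix (\<lambda>x::real^'n. \<chi> i. if i = m then x $ m + x $ n else x $ i) =
      (\<chi> k. if k = m then row m (mat 1) + 1 *s row n (mat 1) else row k (mat 1))"
    by (auto simp: matrix_def axis_def row_def mat_def vec_eq_iff)
  then show ?thesis
    using det_row_operation [OF assms, of "mat 1" 1] by simp
qed

proposition
  fixes f :: "real^'n \<Rightarrow> real^'n"
  assumes "linear f" "S \<in> lmeasurable"
  shows lmeasurable_linear_image_cart: "f ` S \<in> lmeasurable"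
    and measure_linear_image_cart:
      "measure lebesgue (f ` S) = \<bar>det (matrix f)\<bar> * measure lebesgue S"
proof -
  let ?P = "\<lambda>f::real^'n \<Rightarrow> real^'n. \<forall>S\<in>lmeasurable. f ` S \<in> lmeasurable \<and>
              measure lebesgue (f ` S) = \<bar>det (matrix f)\<bar> * measure lebesgue S"
  have "?P f"
  proof (rule induct_linear_elementary [OF \<open>linear f\<close>]; intro ballI)
    fix f g :: "real^'n \<Rightarrow> real^'n" and S :: "(real^'n) set"
    assume "linear f" "linear g" and f: "?P f" and g: "?P g" and "S \<in> lmeasurable"
    then have gS: "g ` S \<in> lmeasurable"
      "measure lebesgue (g ` S) = \<bar>det (matrix g)\<bar> * measure lebesgue S"
      by blast+
    with f have "f ` g ` S \<in> lmeasurable"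
      "measure lebesgue (f ` g ` S) = \<bar>det (matrix f)\<bar> * measure lebesgue (g ` S)"
      by blast+
    with gS show "(f \<circ> g) ` S \<in> lmeasurable \<and>
        measure lebesgue ((f \<circ> g) ` S) = \<bar>det (matrix (f \<circ> g))\<bar> * measure lebesgue S"
      using matrix_compose [OF \<open>linear g\<close> \<open>linear f\<close>] by (simp add: image_comp det_mul abs_mult)
  next
    fix f :: "real^'n \<Rightarrow> real^'n" and i and S :: "(real^'n) set"
    assume "linear f" "\<And>x. f x $ i = 0"
    then have "\<not> inj f"
      by (metis (full_types) linear_injective_imp_surjective one_neq_zero surjE vec_component)
    then have "negligible (f ` S)" "det (matrix f) = 0"
      using \<open>linear f\<close> negligible_linear_singular_image det_nz_iff_inj by blast+
    then show "f ` S \<in> lmeasurable \<and>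
        measure lebesgue (f ` S) = \<bar>det (matrix f)\<bar> * measure lebesgue S"
      by (simp add: negligible_imp_measurable negligible_imp_measure0)
  next
    fix c :: "'n \<Rightarrow> real" and S :: "(real^'n) set"
    assume "S \<in> lmeasurable"
    then show "(\<lambda>x. \<chi> i. c i * x $ i) ` S \<in> lmeasurable \<and>
        measure lebesgue ((\<lambda>x. \<chi> i. c i * x $ i) ` S) =
          \<bar>det (matrix (\<lambda>x. \<chi> i. c i * x $ i))\<bar> * measure lebesgue S"
      by (simp add: measurable_stretch measure_stretch axis_def matrix_def det_diagonal)
  next
    fix m n :: 'n and S :: "(real^'n) set"
    assume "m \<noteq> n" "S \<in> lmeasurable"
    then show "(\<lambda>x. \<chi> i. x $ Transposition.transpose m n i) ` S \<in> lmeasurable \<and>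
        measure lebesgue ((\<lambda>x. \<chi> i. x $ Transposition.transpose m n i) ` S) =
          \<bar>det (matrix (\<lambda>x::real^'n. \<chi> i. x $ Transposition.transpose m n i))\<bar> * measure lebesgue S"
      using measure_coordinate_swap_image [of S m n] abs_det_coordinate_swap [of m n] by simp
  next
    fix m n :: 'n and S :: "(real^'n) set"
    assume "m \<noteq> n" "S \<in> lmeasurable"
    then show "(\<lambda>x. \<chi> i. if i = m then x $ m + x $ n else x $ i) ` S \<in> lmeasurable \<and>
        measure lebesgue ((\<lambda>x. \<chi> i. if i = m then x $ m + x $ n else x $ i) ` S) =
          \<bar>det (matrix (\<lambda>x::real^'n. \<chi> i. if i = m then x $ m + x $ n else x $ i))\<bar> *
            measure lebesgue S"
      using measure_shear_image [of m n S] det_shear [of m n] by simp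
  qed
  with assms show "f ` S \<in> lmeasurable" "measure lebesgue (f ` S) = \<bar>det (matrix f)\<bar> * measure lebesgue S"
    by blast+
qed

section \<open>Norms given as functions\<close>

lemma norm_fn_0: "is_norm_fn N \<Longrightarrow> N 0 = 0"
  unfolding is_norm_fn_def by blast

lemma norm_fn_eq_0_iff: "is_norm_fn N \<Longrightarrow> N x = 0 \<longleftrightarrow> x = 0"
  unfolding is_norm_fn_def by blast

lemma norm_fn_triangle: "is_norm_fn N \<Longrightarrow> N (x + y) \<le> N x + N y"
  unfolding is_norm_fn_def by blast

lemma norm_fn_scale: "is_norm_fn N \<Longrightarrow> N (c *\<^sub>R x) = \<bar>c\<bar> * N x"
  unfolding is_norm_fn_def by blast

lemma norm_fn_minus: "is_norm_fn N \<Longrightarrow> N (- x) = N x"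
  using norm_fn_scale [of N "-1" x] by simp

lemma norm_fn_nonneg:
  assumes "is_norm_fn N"
  shows "0 \<le> N x"
  using norm_fn_triangle [OF assms, of x "- x"] norm_fn_0 [OF assms] norm_fn_minus [OF assms, of x]
  by simp

lemma norm_fn_pos: "is_norm_fn N \<Longrightarrow> x \<noteq> 0 \<Longrightarrow> 0 < N x"
  using norm_fn_nonneg [of N x] norm_fn_eq_0_iff [of N x] by linarith

lemma norm_fn_sum_le:
  assumes "is_norm_fn N"
  shows "N (sum f S) \<le> (\<Sum>i\<in>S. N (f i))"
proof (induction S rule: infinite_finite_induct)
  case (insert x F)
  then show ?case
    using norm_fn_triangle [OF assms, of "f x" "sum f F"] by simp
qed (simp_all add: norm_fn_0 [OF assms])

lemma norm_fn_le_norm: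
  fixes N :: "real^'n \<Rightarrow> real"
  assumes "is_norm_fn N"
  obtains C where "0 < C" "\<And>x. N x \<le> C * norm x"
proof
  define C where "C = (\<Sum>i\<in>UNIV. N (axis i 1)) + 1"
  show "0 < C"
    unfolding C_def using norm_fn_nonneg [OF assms] by (simp add: sum_nonneg add_nonneg_pos)
  fix x :: "real^'n"
  have "N x = N (\<Sum>i\<in>UNIV. x $ i *\<^sub>R axis i 1)"
    using basis_expansion [of x] by (simp add: scalar_mult_eq_scaleR)
  also have "\<dots> \<le> (\<Sum>i\<in>UNIV. \<bar>x $ i\<bar> * N (axis i 1))"
    using norm_fn_sum_le [OF assms, of "\<lambda>i. x $ i *\<^sub>R axis i 1" UNIV]
    by (simp add: norm_fn_scale [OF assms])
  also have "\<dots> \<le> (\<Sum>i\<in>UNIV. norm x * N (axis i 1))"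
    by (intro sum_mono mult_right_mono) (auto simp: component_le_norm_cart norm_fn_nonneg [OF assms])
  also have "\<dots> \<le> C * norm x"
    unfolding C_def by (simp add: sum_distrib_left [symmetric] algebra_simps)
  finally show "N x \<le> C * norm x" .
qed

lemma lipschitz_on_norm_fn:
  fixes N :: "real^'n \<Rightarrow> real"
  assumes "is_norm_fn N"
  obtains C where "C-lipschitz_on UNIV N"
proof -
  obtain C where C: "0 < C" "\<And>x. N x \<le> C * norm x"
    using norm_fn_le_norm [OF assms] by blast
  have "\<bar>N x - N y\<bar> \<le> C * norm (x - y)" for x y
    using norm_fn_triangle [OF assms, of "x - y" y] norm_fn_triangle [OF assms, of "y - x" x]
      norm_fn_minus [OF assms, of "x - y"] C(2) [of "x - y"]
    by simp
  then have "C-lipschitz_on UNIV N"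
    using C(1) by (intro lipschitz_onI) (simp_all add: dist_real_def dist_norm)
  then show ?thesis ..
qed

lemma continuous_on_norm_fn:
  fixes N :: "real^'n \<Rightarrow> real"
  assumes "is_norm_fn N"
  shows "continuous_on S N"
  using lipschitz_on_norm_fn [OF assms]
  by (metis lipschitz_on_continuous_on continuous_on_subset subset_UNIV)

lemma norm_fn_ge_norm:
  fixes N :: "real^'n \<Rightarrow> real"
  assumes "is_norm_fn N"
  obtains c where "0 < c" "\<And>x. c * norm x \<le> N x"
proof -
  have "sphere (0::real^'n) 1 \<noteq> {}"
    by simp
  then obtain x0 where x0: "x0 \<in> sphere 0 1" "\<And>x. x \<in> sphere 0 1 \<Longrightarrow> N x0 \<le> N x"
    using continuous_attains_inf [OF compact_sphere _ continuous_on_norm_fn [OF assms]] by blast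
  have "0 < N x0"
    using x0(1) by (intro norm_fn_pos [OF assms]) auto
  moreover have "N x0 * norm x \<le> N x" for x
  proof (cases "x = 0")
    case False
    then have "N x0 \<le> N ((1 / norm x) *\<^sub>R x)"
      by (intro x0(2)) simp
    also have "\<dots> = N x / norm x"
      by (simp add: norm_fn_scale [OF assms])
    finally show ?thesis
      using False by (simp add: field_simps)
  qed (simp add: norm_fn_0 [OF assms])
  ultimately show thesis
    using that by blast
qed

abbreviation unit_ball :: "(real^'n \<Rightarrow> real) \<Rightarrow> (real^'n) set" where
  "unit_ball N \<equiv> {x. N x \<le> 1}"

lemma compact_unit_ball:
  assumes "is_norm_fn N"
  shows "compact (unit_ball N)"
proof -
  obtain c where c: "0 < c" "\<And>x. c * norm x \<le> N x"
    using norm_fn_ge_norm [OF assms] by blast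
  have "closed (unit_ball N)"
    by (rule closed_Collect_le [OF continuous_on_norm_fn [OF assms] continuous_on_const])
  moreover have "unit_ball N \<subseteq> cball 0 (1 / c)"
  proof
    fix x
    assume "x \<in> unit_ball N"
    then have "c * norm x \<le> 1"
      using c(2) [of x] by simp
    with c(1) show "x \<in> cball 0 (1 / c)"
      by (simp add: field_simps)
  qed
  ultimately show ?thesis
    by (metis bounded_cball bounded_subset compact_eq_bounded_closed)
qed

lemma ball_subset_unit_ball:
  fixes N :: "real^'n \<Rightarrow> real"
  assumes "is_norm_fn N"
  obtains \<delta> where "0 < \<delta>" "ball 0 \<delta> \<subseteq> unit_ball N"
proof -
  obtain C where C: "0 < C" "\<And>x. N x \<le> C * norm x"
    using norm_fn_le_norm [OF assms] by blast
  have "ball 0 (1 / C) \<subseteq> unit_ball N"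
  proof
    fix x :: "real^'n"
    assume "x \<in> ball 0 (1 / C)"
    then have "C * norm x \<le> 1"
      using C(1) by (simp add: field_simps)
    then show "x \<in> unit_ball N"
      using C(2) [of x] by simp
  qed
  with C(1) show thesis
    using that [of "1 / C"] by simp
qed

lemma measure_ball_pos: "0 < \<delta> \<Longrightarrow> 0 < measure lebesgue (ball (c::'a::euclidean_space) \<delta>)"
  using content_ball_pos [of \<delta> c] by (simp add: measure_completion)

lemma measure_unit_ball_pos:
  fixes N :: "real^'n \<Rightarrow> real"
  assumes "is_norm_fn N"
  shows "0 < measure lebesgue (unit_ball N)"
proof -
  obtain \<delta> where "0 < \<delta>" "ball 0 \<delta> \<subseteq> unit_ball N"
    using ball_subset_unit_ball [OF assms] by blast
  then have "measure lebesgue (ball (0::real^'n) \<delta>) \<le> measure lebesgue (unit_ball N)"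
    using lmeasurable_compact [OF compact_unit_ball [OF assms]] by (intro measure_mono_fmeasurable) auto
  with measure_ball_pos [OF \<open>0 < \<delta>\<close>] show ?thesis
    by (rule less_le_trans)
qed

lemma lipschitz_on_if_norm_fn_lipschitz:
  fixes N :: "real^'n \<Rightarrow> real" and f :: "real^'n \<Rightarrow> 'b::real_normed_vector"
  assumes "is_norm_fn N" "\<And>x y. norm (f x - f y) \<le> L * N (x - y)"
  obtains C where "C-lipschitz_on UNIV f"
proof -
  obtain C where C: "0 < C" "\<And>x. N x \<le> C * norm x"
    using norm_fn_le_norm [OF assms(1)] by blast
  have "norm (f x - f y) \<le> (\<bar>L\<bar> * C) * norm (x - y)" for x y
  proof -
    have "norm (f x - f y) \<le> \<bar>L\<bar> * N (x - y)"
      using assms(2) [of x y] norm_fn_nonneg [OF assms(1), of "x - y"]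
      by (meson abs_ge_self mult_right_mono order_trans)
    also have "\<dots> \<le> \<bar>L\<bar> * (C * norm (x - y))"
      using C(2) by (simp add: mult_left_mono)
    finally show ?thesis
      by (simp add: mult.assoc)
  qed
  then have "(\<bar>L\<bar> * C)-lipschitz_on UNIV f"
    using C(1) by (intro lipschitz_onI) (simp_all add: dist_norm)
  then show ?thesis ..
qed

lemma borel_measurable_lipschitz_on:
  fixes f :: "'a::euclidean_space \<Rightarrow> 'b::real_normed_vector"
  assumes "C-lipschitz_on UNIV f"
  shows "f \<in> borel_measurable lborel"
  using borel_measurable_continuous_onI [OF lipschitz_on_continuous_on [OF assms]] by simp

lemma borel_measurable_if_norm_fn_lipschitz:
  fixes N :: "real^'n \<Rightarrow> real" and f :: "real^'n \<Rightarrow> 'b::real_normed_vector"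
  assumes "is_norm_fn N" "\<And>x y. norm (f x - f y) \<le> L * N (x - y)"
  shows "f \<in> borel_measurable lborel"
  using lipschitz_on_if_norm_fn_lipschitz [OF assms] borel_measurable_lipschitz_on by metis

lemma norm_fn_lipschitz_if_lipschitz_on:
  fixes N :: "real^'n \<Rightarrow> real" and f :: "real^'n \<Rightarrow> 'b::real_normed_vector"
  assumes "is_norm_fn N" "C-lipschitz_on UNIV f"
  obtains L where "\<And>x y. norm (f x - f y) \<le> L * N (x - y)"
proof -
  obtain c where c: "0 < c" "\<And>x. c * norm x \<le> N x"
    using norm_fn_ge_norm [OF assms(1)] by blast
  have "norm (f x - f y) \<le> (C / c) * N (x - y)" for x y
  proof -
    have "norm (f x - f y) \<le> C * norm (x - y)"
      using lipschitz_on_normD [OF assms(2)] by simp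
    also have "\<dots> \<le> C * (N (x - y) / c)"
      using c lipschitz_on_nonneg [OF assms(2)] by (intro mult_left_mono) (simp_all add: field_simps)
    finally show ?thesis
      by simp
  qed
  then show thesis
    by (rule that)
qed

section \<open>Volume ratios of unit balls\<close>

definition norm_contractions ::
    "(real^'n \<Rightarrow> real) \<Rightarrow> (real^'n \<Rightarrow> real) \<Rightarrow> (real^'n \<Rightarrow> real^'n) set" where
  "norm_contractions \<sigma> N = {F. linear F \<and> (\<forall>v. \<sigma> (F v) \<le> N v)}"

lemma unit_ball_subset_preimage_iff:
  fixes \<sigma> N :: "real^'n \<Rightarrow> real" and F :: "real^'n \<Rightarrow> real^'n"
  assumes "is_norm_fn \<sigma>" "is_norm_fn N" "linear F"
  shows "unit_ball N \<subseteq> F -` unit_ball \<sigma> \<longleftrightarrow> (\<forall>v. \<sigma> (F v) \<le> N v)"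
proof
  assume sub: "unit_ball N \<subseteq> F -` unit_ball \<sigma>"
  show "\<forall>v. \<sigma> (F v) \<le> N v"
  proof
    fix v
    show "\<sigma> (F v) \<le> N v"
    proof (cases "v = 0")
      case True
      then show ?thesis
        by (simp add: linear_0 [OF assms(3)] norm_fn_0 [OF assms(1)] norm_fn_0 [OF assms(2)])
    next
      case False
      then have "0 < N v"
        by (rule norm_fn_pos [OF assms(2)])
      then have "(1 / N v) *\<^sub>R v \<in> unit_ball N"
        by (simp add: norm_fn_scale [OF assms(2)])
      with sub have "\<sigma> (F ((1 / N v) *\<^sub>R v)) \<le> 1"
        by blast
      with \<open>0 < N v\<close> show ?thesis
        by (simp add: linear_scale [OF assms(3)] norm_fn_scale [OF assms(1)])
    qed
  qed
next
  assume "\<forall>v. \<sigma> (F v) \<le> N v"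
  then show "unit_ball N \<subseteq> F -` unit_ball \<sigma>"
    by (auto intro: order_trans)
qed

lemma disjoint_family_translated_balls:
  fixes c w :: "'a::real_normed_vector"
  assumes "norm w = 2 * \<delta>"
  shows "disjoint_family (\<lambda>j::nat. (+) (real j *\<^sub>R w) ` ball c \<delta>)"
  unfolding disjoint_family_on_def
proof (intro ballI impI)
  fix i j :: nat
  assume "i \<noteq> j"
  show "(+) (real i *\<^sub>R w) ` ball c \<delta> \<inter> (+) (real j *\<^sub>R w) ` ball c \<delta> = {}"
  proof (rule ccontr)
    assume "(+) (real i *\<^sub>R w) ` ball c \<delta> \<inter> (+) (real j *\<^sub>R w) ` ball c \<delta> \<noteq> {}"
    then obtain x y where xy: "x \<in> ball c \<delta>" "y \<in> ball c \<delta>" "real i *\<^sub>R w + x = real j *\<^sub>R w + y"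
      by blast
    from xy(1) have "0 < \<delta>"
      by (auto intro: le_less_trans [OF zero_le_dist])
    from xy(3) have "y = real i *\<^sub>R w + x - real j *\<^sub>R w"
      by simp
    then have "y - x = (real i - real j) *\<^sub>R w"
      by (simp add: algebra_simps)
    then have "\<bar>real i - real j\<bar> * (2 * \<delta>) = dist y x"
      by (simp add: dist_norm assms)
    also have "\<dots> < 2 * \<delta>"
      using xy(1,2) dist_triangle_less_add [of y c \<delta> x \<delta>] by (simp add: dist_commute)
    finally have "\<bar>real i - real j\<bar> < 1"
      using \<open>0 < \<delta>\<close> by (simp add: mult_less_cancel_right_pos)
    with \<open>i \<noteq> j\<close> show False
      by linarith
  qed
qed

lemma not_lmeasurable_if_line_invariant:
  fixes S :: "'a::euclidean_space set"
  assumes "0 < \<delta>" "ball c \<delta> \<subseteq> S" "u \<noteq> 0"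
    and invariant: "\<And>x t. x \<in> S \<Longrightarrow> x + t *\<^sub>R u \<in> S"
  shows "S \<notin> lmeasurable"
proof
  assume S: "S \<in> lmeasurable"
  \<comment> \<open>\<open>S\<close> contains infinitely many disjoint translates of \<open>ball c \<delta>\<close>\<close>
  define w where "w = (2 * \<delta> / norm u) *\<^sub>R u"
  have norm_w: "norm w = 2 * \<delta>"
    using assms by (simp add: w_def)
  define D where "D j = (+) (real j *\<^sub>R w) ` ball c \<delta>" for j :: nat
  have D_sub: "D j \<subseteq> S" for j
  proof
    fix y
    assume "y \<in> D j"
    then obtain z where "z \<in> ball c \<delta>" "y = real j *\<^sub>R w + z"
      unfolding D_def by blast
    then show "y \<in> S"
      using invariant [of z "real j * (2 * \<delta> / norm u)"] assms(2) by (auto simp: w_def algebra_simps)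
  qed
  have "disjoint_family D"
    unfolding D_def by (rule disjoint_family_translated_balls [OF norm_w])
  have D_lmeasurable: "D j \<in> lmeasurable" for j
    unfolding D_def by (rule measurable_translation) simp
  have measure_D: "measure lebesgue (D j) = measure lebesgue (ball c \<delta>)" for j
    unfolding D_def by (rule measure_translation)
  have many_balls: "real m * measure lebesgue (ball c \<delta>) \<le> measure lebesgue S" for m
  proof -
    have "real m * measure lebesgue (ball c \<delta>) = (\<Sum>j<m. measure lebesgue (D j))"
      by (simp add: measure_D)
    also have "\<dots> = measure lebesgue (\<Union>j<m. D j)"
    proof (rule measure_finite_Union [symmetric])
      show "D ` {..<m} \<subseteq> sets lebesgue"
        using D_lmeasurable by blast
      show "disjoint_family_on D {..<m}"
        using \<open>disjoint_family D\<close> by (rule disjoint_family_on_mono [OF subset_UNIV])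
      show "\<And>j. j \<in> {..<m} \<Longrightarrow> emeasure lebesgue (D j) \<noteq> \<infinity>"
        using fmeasurableD2 [OF D_lmeasurable] by (simp only: infinity_ennreal_def not_False_eq_True)
    qed simp
    also have "\<dots> \<le> measure lebesgue S"
      using D_sub D_lmeasurable S by (intro measure_mono_fmeasurable) auto
    finally show ?thesis .
  qed
  obtain m :: nat where "measure lebesgue S / measure lebesgue (ball c \<delta>) < real m"
    using reals_Archimedean2 by blast
  then have "measure lebesgue S < real m * measure lebesgue (ball c \<delta>)"
    using measure_ball_pos [OF assms(1), of c] by (simp add: divide_less_eq)
  with many_balls [of m] show False
    by linarith
qed

lemma measure_eq_0_if_not_fmeasurable: "A \<notin> fmeasurable M \<Longrightarrow> measure M A = 0"
  by (cases "A \<in> sets M") (auto simp: fmeasurable_def measure_def less_top [symmetric] emeasure_notin_sets)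

lemma measure_preimage_unit_ball_singular:
  fixes \<sigma> N :: "real^'n \<Rightarrow> real" and F :: "real^'n \<Rightarrow> real^'n"
  assumes "is_norm_fn N" "linear F" "det (matrix F) = 0" "unit_ball N \<subseteq> F -` unit_ball \<sigma>"
  shows "measure lebesgue (F -` unit_ball \<sigma>) = 0"
proof -
  have "\<not> inj F"
    using assms(2,3) det_nz_iff_inj by blast
  then obtain u where "u \<noteq> 0" "F u = 0"
    using linear_inj_iff_eq_0 [OF assms(2)] by blast
  obtain \<delta> where "0 < \<delta>" "ball 0 \<delta> \<subseteq> unit_ball N"
    using ball_subset_unit_ball [OF assms(1)] by blast
  have "F -` unit_ball \<sigma> \<notin> lmeasurable"
  proof (rule not_lmeasurable_if_line_invariant)
    show "ball 0 \<delta> \<subseteq> F -` unit_ball \<sigma>"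
      using \<open>ball 0 \<delta> \<subseteq> unit_ball N\<close> assms(4) by blast
    show "x + t *\<^sub>R u \<in> F -` unit_ball \<sigma>" if "x \<in> F -` unit_ball \<sigma>" for x t
      using that \<open>F u = 0\<close> by (simp add: linear_add [OF assms(2)] linear_scale [OF assms(2)])
  qed fact+
  then show ?thesis
    by (rule measure_eq_0_if_not_fmeasurable)
qed

lemma volume_ratio_eq_abs_det:
  fixes \<sigma> N :: "real^'n \<Rightarrow> real" and F :: "real^'n \<Rightarrow> real^'n"
  assumes "is_norm_fn \<sigma>" "is_norm_fn N" "linear F" "unit_ball N \<subseteq> F -` unit_ball \<sigma>"
  shows "measure lebesgue (unit_ball \<sigma>) / measure lebesgue (F -` unit_ball \<sigma>) = \<bar>det (matrix F)\<bar>"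
proof (cases "det (matrix F) = 0")
  case True
  then show ?thesis
    using measure_preimage_unit_ball_singular [OF assms(2,3) True assms(4)] by simp
next
  case False
  then obtain G where G: "linear G" "\<And>x. G (F x) = x" "\<And>x. F (G x) = x"
    using det_nz_iff_inj [OF assms(3)] linear_injective_isomorphism [OF assms(3)] by metis
  have preimage: "F -` unit_ball \<sigma> = G ` unit_ball \<sigma>"
  proof (intro set_eqI iffI)
    fix x
    assume "x \<in> F -` unit_ball \<sigma>"
    then show "x \<in> G ` unit_ball \<sigma>"
      using G(2) [of x] by (metis imageI vimageE)
  qed (use G(3) in auto)
  have "matrix G ** matrix F = mat 1"
    using matrix_compose [OF assms(3) G(1)] G(2) matrix_id_mat_1 by (metis comp_apply eq_id_iff)
  then have "\<bar>det (matrix G)\<bar> * \<bar>det (matrix F)\<bar> = 1"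
    by (metis abs_mult abs_one det_I det_mul)
  then have "\<bar>det (matrix G)\<bar> \<noteq> 0" "\<bar>det (matrix G)\<bar> * \<bar>det (matrix F)\<bar> = 1"
    by auto
  then have "1 / \<bar>det (matrix G)\<bar> = \<bar>det (matrix F)\<bar>"
    by (simp add: divide_eq_eq mult.commute)
  moreover have "measure lebesgue (F -` unit_ball \<sigma>) = \<bar>det (matrix G)\<bar> * measure lebesgue (unit_ball \<sigma>)"
    unfolding preimage
    by (rule measure_linear_image_cart [OF G(1) lmeasurable_compact [OF compact_unit_ball [OF assms(1)]]])
  ultimately show ?thesis
    using measure_unit_ball_pos [OF assms(1)] by simp
qed

lemma J_sigma_eq_SUP:
  fixes \<sigma> N :: "real^'n \<Rightarrow> real"
  assumes "is_norm_fn \<sigma>" "is_norm_fn N"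
  shows "J_sigma \<sigma> N = (SUP F\<in>norm_contractions \<sigma> N. \<bar>det (matrix F)\<bar>)"
proof -
  have contractions: "{F. linear F \<and> unit_ball N \<subseteq> F -` unit_ball \<sigma>} = norm_contractions \<sigma> N"
    using unit_ball_subset_preimage_iff [OF assms] unfolding norm_contractions_def by blast
  have "J_sigma \<sigma> N = (SUP F\<in>{F. linear F \<and> unit_ball N \<subseteq> F -` unit_ball \<sigma>}.
      measure lebesgue (unit_ball \<sigma>) / measure lebesgue (F -` unit_ball \<sigma>))"
    unfolding J_sigma_def by (simp only: setcompr_eq_image)
  also have "\<dots> = (SUP F\<in>norm_contractions \<sigma> N. \<bar>det (matrix F)\<bar>)"
    unfolding contractions [symmetric] using volume_ratio_eq_abs_det [OF assms] by (intro SUP_cong) auto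
  finally show ?thesis .
qed

lemma zero_in_norm_contractions:
  "is_norm_fn \<sigma> \<Longrightarrow> is_norm_fn N \<Longrightarrow> (\<lambda>v. 0) \<in> norm_contractions \<sigma> N"
  by (simp add: norm_contractions_def linear_zero norm_fn_0 norm_fn_nonneg)

lemma bdd_above_abs_det_norm_contractions:
  fixes \<sigma> N :: "real^'n \<Rightarrow> real"
  assumes "is_norm_fn \<sigma>" "is_norm_fn N"
  shows "bdd_above ((\<lambda>F. \<bar>det (matrix F)\<bar>) ` norm_contractions \<sigma> N)"
proof (rule bdd_aboveI2)
  fix F
  assume "F \<in> norm_contractions \<sigma> N"
  then have F: "linear F" "\<And>v. \<sigma> (F v) \<le> N v"
    by (auto simp: norm_contractions_def)
  have balls: "unit_ball \<sigma> \<in> lmeasurable" "unit_ball N \<in> lmeasurable"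
    using lmeasurable_compact compact_unit_ball assms by blast+
  have "\<bar>det (matrix F)\<bar> * measure lebesgue (unit_ball N) = measure lebesgue (F ` unit_ball N)"
    by (rule measure_linear_image_cart [OF F(1) balls(2), symmetric])
  also have "\<dots> \<le> measure lebesgue (unit_ball \<sigma>)"
    using F(2) lmeasurable_linear_image_cart [OF F(1) balls(2)] balls(1)
    by (intro measure_mono_fmeasurable) (auto intro: order_trans)
  finally show "\<bar>det (matrix F)\<bar> \<le> measure lebesgue (unit_ball \<sigma>) / measure lebesgue (unit_ball N)"
    using measure_unit_ball_pos [OF assms(2)] by (simp add: field_simps)
qed

lemma abs_det_le_J_sigma:
  fixes \<sigma> N :: "real^'n \<Rightarrow> real"
  assumes "is_norm_fn \<sigma>" "is_norm_fn N" "F \<in> norm_contractions \<sigma> N"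
  shows "\<bar>det (matrix F)\<bar> \<le> J_sigma \<sigma> N"
  unfolding J_sigma_eq_SUP [OF assms(1,2)]
  by (rule cSUP_upper [OF assms(3) bdd_above_abs_det_norm_contractions [OF assms(1,2)]])

lemma J_sigma_nonneg:
  fixes \<sigma> N :: "real^'n \<Rightarrow> real"
  assumes "is_norm_fn \<sigma>" "is_norm_fn N"
  shows "0 \<le> J_sigma \<sigma> N"
  using abs_det_le_J_sigma [OF assms zero_in_norm_contractions [OF assms]] by linarith

lemma J_sigma_le:
  fixes \<sigma> N :: "real^'n \<Rightarrow> real"
  assumes "is_norm_fn \<sigma>" "is_norm_fn N"
    and "\<And>F. F \<in> norm_contractions \<sigma> N \<Longrightarrow> \<bar>det (matrix F)\<bar> \<le> c"
  shows "J_sigma \<sigma> N \<le> c"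
  unfolding J_sigma_eq_SUP [OF assms(1,2)]
  using zero_in_norm_contractions [OF assms(1,2)] assms(3) by (intro cSUP_least) auto

section \<open>Lipschitz constants and Jacobians\<close>

lemma bdd_above_L_sigma_quotients:
  fixes \<sigma> N :: "real^'n \<Rightarrow> real" and \<pi> :: "real^'n \<Rightarrow> real^'n"
  assumes "is_norm_fn \<sigma>" "is_norm_fn N" "\<And>x y. norm (\<pi> x - \<pi> y) \<le> L * N (x - y)"
  shows "bdd_above {\<sigma> (\<pi> x - \<pi> y) / N (x - y) | x y. x \<noteq> y}"
proof -
  obtain C where C: "0 < C" "\<And>x. \<sigma> x \<le> C * norm x"
    using norm_fn_le_norm [OF assms(1)] by blast
  have "\<sigma> (\<pi> x - \<pi> y) / N (x - y) \<le> C * L" if "x \<noteq> y" for x y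
  proof -
    have "\<sigma> (\<pi> x - \<pi> y) \<le> C * (L * N (x - y))"
      using C(2) [of "\<pi> x - \<pi> y"] mult_left_mono [OF assms(3) [of x y], of C] C(1) by linarith
    moreover have "0 < N (x - y)"
      using that by (simp add: norm_fn_pos [OF assms(2)])
    ultimately show ?thesis
      by (simp add: pos_divide_le_eq mult.assoc)
  qed
  then show ?thesis
    by (intro bdd_aboveI [where M = "C * L"]) blast
qed

lemma L_sigma_bound:
  fixes \<sigma> N :: "real^'n \<Rightarrow> real" and \<pi> :: "real^'n \<Rightarrow> real^'n"
  assumes "is_norm_fn \<sigma>" "is_norm_fn N" "\<And>x y. norm (\<pi> x - \<pi> y) \<le> L * N (x - y)"
  shows "\<sigma> (\<pi> x - \<pi> y) \<le> L_sigma \<sigma> N \<pi> * N (x - y)"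
proof (cases "x = y")
  case True
  then show ?thesis
    by (simp add: norm_fn_0 [OF assms(1)] norm_fn_0 [OF assms(2)])
next
  case False
  have "\<sigma> (\<pi> x - \<pi> y) / N (x - y) \<le> L_sigma \<sigma> N \<pi>"
    unfolding L_sigma_def using False by (intro cSup_upper [OF _ bdd_above_L_sigma_quotients [OF assms]]) blast
  moreover have "0 < N (x - y)"
    using False by (simp add: norm_fn_pos [OF assms(2)])
  ultimately show ?thesis
    by (simp add: pos_divide_le_eq)
qed

lemma L_sigma_nonneg:
  fixes \<sigma> N :: "real^'n \<Rightarrow> real" and \<pi> :: "real^'n \<Rightarrow> real^'n"
  assumes "is_norm_fn \<sigma>" "is_norm_fn N" "\<And>x y. norm (\<pi> x - \<pi> y) \<le> L * N (x - y)"
  shows "0 \<le> L_sigma \<sigma> N \<pi>"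
proof -
  have "0 \<le> L_sigma \<sigma> N \<pi> * N (1 - 0)"
    using L_sigma_bound [OF assms, of 1 0] norm_fn_nonneg [OF assms(1)] by (meson order_trans)
  moreover have "0 < N (1 - 0 :: real^'n)"
    by (simp add: norm_fn_pos [OF assms(2)])
  ultimately show ?thesis
    by (simp add: zero_le_mult_iff)
qed

lemma L_sigma_le_1:
  fixes \<sigma> N :: "real^'n \<Rightarrow> real" and F :: "real^'n \<Rightarrow> real^'n"
  assumes "is_norm_fn \<sigma>" "is_norm_fn N" "F \<in> norm_contractions \<sigma> N"
  shows "L_sigma \<sigma> N F \<le> 1"
  unfolding L_sigma_def
proof (rule cSup_least)
  have "(1::real^'n) \<noteq> 0"
    by simp
  then show "{\<sigma> (F x - F y) / N (x - y) | x y. x \<noteq> y} \<noteq> {}"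
    by blast
next
  fix q
  assume "q \<in> {\<sigma> (F x - F y) / N (x - y) | x y. x \<noteq> y}"
  then obtain x y where q: "q = \<sigma> (F x - F y) / N (x - y)" "x \<noteq> y"
    by blast
  have "\<sigma> (F x - F y) \<le> N (x - y)"
    using assms(3) unfolding norm_contractions_def by (metis (mono_tags, lifting) linear_diff mem_Collect_eq)
  moreover have "0 < N (x - y)"
    using q(2) by (simp add: norm_fn_pos [OF assms(2)])
  ultimately show "q \<le> 1"
    by (simp add: q(1))
qed

lemma le_if_le_add_mult_epsilon:
  fixes a b c :: real
  assumes "0 \<le> c" "\<And>\<epsilon>. 0 < \<epsilon> \<Longrightarrow> a \<le> b + c * \<epsilon>"
  shows "a \<le> b"
proof (rule field_le_epsilon)
  fix e :: real
  assume "0 < e"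
  moreover have "0 < c + 1"
    using assms(1) by simp
  ultimately have "a \<le> b + c * (e / (c + 1))"
    by (intro assms(2) divide_pos_pos)
  also have "c * (e / (c + 1)) \<le> e"
    using assms(1) \<open>0 < e\<close> by (simp add: field_simps)
  finally show "a \<le> b + e"
    by simp
qed

lemma norm_fn_derivative_le:
  fixes \<sigma> N :: "real^'n \<Rightarrow> real" and \<pi> D :: "real^'n \<Rightarrow> real^'n"
  assumes "is_norm_fn \<sigma>" "is_norm_fn N" "(\<pi> has_derivative D) (at x)"
    and lip: "\<And>a b. \<sigma> (\<pi> a - \<pi> b) \<le> L * N (a - b)"
  shows "\<sigma> (D v) \<le> L * N v"
proof -
  obtain C where C: "0 < C" "\<And>y. \<sigma> y \<le> C * norm y"
    using norm_fn_le_norm [OF assms(1)] by blast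
  have lin: "linear D"
    using assms(3) has_derivative_linear by blast
  show ?thesis
  proof (rule le_if_le_add_mult_epsilon)
    show "0 \<le> C * norm v"
      using C(1) by simp
    fix \<epsilon> :: real
    assume "0 < \<epsilon>"
    then obtain d where "0 < d"
      and d: "\<And>y. norm (y - x) < d \<Longrightarrow> norm (\<pi> y - \<pi> x - D (y - x)) \<le> \<epsilon> * norm (y - x)"
      using assms(3) unfolding has_derivative_at_alt by blast
    define t where "t = d / (2 * (norm v + 1))"
    have "0 < t"
      unfolding t_def using \<open>0 < d\<close>
      by (intro divide_pos_pos mult_pos_pos add_nonneg_pos norm_ge_zero) simp_all
    have "t * norm v = d / 2 * (norm v / (norm v + 1))"
      by (simp add: t_def)
    also have "\<dots> < d"
    proof -
      have frac: "a / (a + 1) \<le> 1" if "0 \<le> a" for a :: real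
        using that by simp
      show ?thesis
        using \<open>0 < d\<close> by (intro le_less_trans [OF mult_left_le]) (simp_all add: frac)
    qed
    finally have small: "norm ((x + t *\<^sub>R v) - x) < d"
      using \<open>0 < t\<close> by simp
    let ?y = "x + t *\<^sub>R v"
    have "t * \<sigma> (D v) = \<sigma> (D (t *\<^sub>R v))"
      using \<open>0 < t\<close> by (simp add: linear_scale [OF lin] norm_fn_scale [OF assms(1)])
    also have "\<dots> \<le> \<sigma> (\<pi> ?y - \<pi> x) + \<sigma> (D (t *\<^sub>R v) - (\<pi> ?y - \<pi> x))"
      using norm_fn_triangle [OF assms(1), of "\<pi> ?y - \<pi> x" "D (t *\<^sub>R v) - (\<pi> ?y - \<pi> x)"] by simp
    also have "\<dots> \<le> L * N (t *\<^sub>R v) + C * norm (\<pi> ?y - \<pi> x - D (t *\<^sub>R v))"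
      using lip [of ?y x] C(2) [of "D (t *\<^sub>R v) - (\<pi> ?y - \<pi> x)"] by (simp add: norm_minus_commute)
    also have "\<dots> \<le> L * (t * N v) + C * (\<epsilon> * (t * norm v))"
      using d [OF small] C(1) \<open>0 < t\<close> by (simp add: norm_fn_scale [OF assms(2)])
    finally have "t * \<sigma> (D v) \<le> t * (L * N v + C * norm v * \<epsilon>)"
      by (simp add: algebra_simps)
    with \<open>0 < t\<close> show "\<sigma> (D v) \<le> L * N v + C * norm v * \<epsilon>"
      by simp
  qed
qed

lemma jac_det_linear: "linear F \<Longrightarrow> jac_det F x = det (matrix F)"
  using linear_imp_has_derivative [of F] frechet_derivative_at [of F F x]
  by (auto simp: jac_det_def differentiable_def)

lemma abs_det_le_J_sigma_scaled:
  fixes \<sigma> N :: "real^'n \<Rightarrow> real" and D :: "real^'n \<Rightarrow> real^'n"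
  assumes "is_norm_fn \<sigma>" "is_norm_fn N" "linear D" "0 \<le> L" and bound: "\<And>v. \<sigma> (D v) \<le> L * N v"
  shows "\<bar>det (matrix D)\<bar> \<le> L ^ CARD('n) * J_sigma \<sigma> N"
proof (cases "L = 0")
  case True
  have "D v = 0" for v
    using bound [of v] True norm_fn_nonneg [OF assms(1), of "D v"] norm_fn_eq_0_iff [OF assms(1), of "D v"]
    by simp
  then have "D = (*\<^sub>R) 0"
    by (simp add: fun_eq_iff)
  then show ?thesis
    using True J_sigma_nonneg [OF assms(1,2)] by (simp add: det_matrix_scaleR zero_power)
next
  case False
  with \<open>0 \<le> L\<close> have "0 < L"
    by simp
  define F where "F = D \<circ> (*\<^sub>R) (1 / L)"
  have lin_scale: "linear ((*\<^sub>R) (1 / L) :: real^'n \<Rightarrow> real^'n)"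
    by (simp add: bounded_linear_scaleR_right bounded_linear.linear)
  have "\<sigma> (F v) \<le> N v" for v
    using bound [of "(1 / L) *\<^sub>R v"] \<open>0 < L\<close> by (simp add: F_def norm_fn_scale [OF assms(2)])
  with linear_compose [OF lin_scale assms(3)] have "F \<in> norm_contractions \<sigma> N"
    by (simp add: norm_contractions_def F_def)
  then have "\<bar>det (matrix F)\<bar> \<le> J_sigma \<sigma> N"
    by (rule abs_det_le_J_sigma [OF assms(1,2)])
  moreover have "det (matrix F) = det (matrix D) / L ^ CARD('n)"
    unfolding F_def matrix_compose [OF lin_scale assms(3)]
    by (simp add: det_mul det_matrix_scaleR power_one_over)
  ultimately have "\<bar>det (matrix D)\<bar> / L ^ CARD('n) \<le> J_sigma \<sigma> N"
    using \<open>0 < L\<close> by (simp add: abs_divide)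
  with \<open>0 < L\<close> show ?thesis
    by (simp add: pos_divide_le_eq mult.commute)
qed

lemma abs_jac_det_le:
  fixes \<sigma> N :: "real^'n \<Rightarrow> real" and \<pi> :: "real^'n \<Rightarrow> real^'n"
  assumes "is_norm_fn \<sigma>" "is_norm_fn N" "\<And>x y. norm (\<pi> x - \<pi> y) \<le> L' * N (x - y)"
  shows "\<bar>jac_det \<pi> x\<bar> \<le> L_sigma \<sigma> N \<pi> ^ CARD('n) * J_sigma \<sigma> N"
proof (cases "\<pi> differentiable (at x)")
  case False
  then show ?thesis
    using L_sigma_nonneg [OF assms] J_sigma_nonneg [OF assms(1,2)] by (simp add: jac_det_def)
next
  case True
  define D where "D = frechet_derivative \<pi> (at x)"
  have der: "(\<pi> has_derivative D) (at x)"
    using True frechet_derivative_works D_def by blast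
  have "\<sigma> (D v) \<le> L_sigma \<sigma> N \<pi> * N v" for v
    using norm_fn_derivative_le [OF assms(1,2) der] L_sigma_bound [OF assms] by simp
  then have "\<bar>det (matrix D)\<bar> \<le> L_sigma \<sigma> N \<pi> ^ CARD('n) * J_sigma \<sigma> N"
    using der has_derivative_linear L_sigma_nonneg [OF assms]
    by (intro abs_det_le_J_sigma_scaled [OF assms(1,2)]) blast+
  then show ?thesis
    using True by (simp add: jac_det_def D_def)
qed

section \<open>The mass of the current\<close>

lemma borel_representative:
  fixes \<theta> :: "'a::euclidean_space \<Rightarrow> real"
  assumes "integrable lebesgue \<theta>"
  obtains \<theta>' where "\<theta>' \<in> borel_measurable lborel" "integrable lborel \<theta>'"
    "AE x in lebesgue. \<theta> x = \<theta>' x"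
proof -
  obtain \<theta>' where \<theta>': "\<theta>' \<in> borel_measurable lborel" "AE x in lborel. \<theta> x = \<theta>' x"
    using completion_ex_borel_measurable_real [OF borel_measurable_integrable [OF assms]] by blast
  have ae: "AE x in lebesgue. \<theta> x = \<theta>' x"
    by (rule AE_completion [OF \<theta>'(2)])
  have "integrable lebesgue \<theta>'"
    by (rule integrable_cong_AE_imp [OF assms measurable_completion [OF \<theta>'(1)] ae])
  then have "integrable lborel \<theta>'"
    using integrable_completion [OF \<theta>'(1)] by blast
  then show thesis
    by (rule that [OF \<theta>'(1) _ ae])
qed

lemma integrable_mult_bounded:
  fixes g f :: "'a \<Rightarrow> real"
  assumes "integrable M g" "f \<in> borel_measurable M" "\<And>x. \<bar>f x\<bar> \<le> B"
  shows "integrable M (\<lambda>x. g x * f x)"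
proof (rule Bochner_Integration.integrable_bound)
  show "integrable M (\<lambda>x. B * \<bar>g x\<bar>)"
    using assms(1) by (intro integrable_mult_right integrable_abs)
  show "(\<lambda>x. g x * f x) \<in> borel_measurable M"
    using borel_measurable_integrable [OF assms(1)] assms(2) by simp
  have "0 \<le> B"
    by (meson abs_ge_zero assms(3) order_trans)
  moreover have "\<bar>g x\<bar> * \<bar>f x\<bar> \<le> B * \<bar>g x\<bar>" for x
    using mult_left_mono [OF assms(3) [of x] abs_ge_zero [of "g x"]] by (simp add: mult.commute)
  ultimately show "AE x in M. norm (g x * f x) \<le> norm (B * \<bar>g x\<bar>)"
    by (simp add: abs_mult)
qed

lemma abs_push_current_le:
  fixes \<sigma> N \<theta> \<theta>' f :: "real^'n \<Rightarrow> real" and \<pi> :: "real^'n \<Rightarrow> real^'n"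
  assumes "is_norm_fn \<sigma>" "is_norm_fn N"
    and \<theta>': "\<theta>' \<in> borel_measurable lborel" "integrable lborel \<theta>'" "AE x in lebesgue. \<theta> x = \<theta>' x"
    and "in_Dn N f \<pi>"
  shows "\<bar>push_current \<theta> f \<pi>\<bar> \<le> L_sigma \<sigma> N \<pi> ^ CARD('n) *
      (\<integral>x. \<bar>f x\<bar> \<partial>density lborel (\<lambda>x. ennreal (\<bar>\<theta>' x\<bar> * J_sigma \<sigma> N)))"
proof -
  obtain B Lf L\<pi> where B: "\<And>x. \<bar>f x\<bar> \<le> B" and Lf: "\<And>x y. \<bar>f x - f y\<bar> \<le> Lf * N (x - y)"
    and L\<pi>: "\<And>x y. norm (\<pi> x - \<pi> y) \<le> L\<pi> * N (x - y)"
    using assms(6) unfolding in_Dn_def by blast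
  have f: "f \<in> borel_measurable lborel"
    by (rule borel_measurable_if_norm_fn_lipschitz [OF assms(2), where L = Lf]) (simp add: Lf)
  define J where "J = J_sigma \<sigma> N"
  define K where "K = L_sigma \<sigma> N \<pi> ^ CARD('n) * J"
  have "0 \<le> J"
    unfolding J_def by (rule J_sigma_nonneg [OF assms(1,2)])
  then have "0 \<le> K"
    unfolding K_def using L_sigma_nonneg [OF assms(1,2) L\<pi>] by simp
  have pointwise: "\<bar>\<theta>' x * f x * jac_det \<pi> x\<bar> \<le> K * (\<bar>\<theta>' x\<bar> * \<bar>f x\<bar>)" for x
    using mult_left_mono [OF abs_jac_det_le [OF assms(1,2) L\<pi>, of x], of "\<bar>\<theta>' x\<bar> * \<bar>f x\<bar>"]
    by (simp add: K_def J_def abs_mult mult_ac)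
  have meas: "(\<lambda>x. K * (\<bar>\<theta>' x\<bar> * \<bar>f x\<bar>)) \<in> borel_measurable lborel"
    using \<theta>'(1) f by measurable
  have "integrable lborel (\<lambda>x. K * \<bar>\<theta>' x * f x\<bar>)"
    by (intro integrable_mult_right integrable_abs integrable_mult_bounded [OF \<theta>'(2) f B])
  then have int: "integrable lebesgue (\<lambda>x. K * (\<bar>\<theta>' x\<bar> * \<bar>f x\<bar>))"
    using integrable_completion [OF meas] by (simp add: abs_mult)
  have "\<bar>push_current \<theta> f \<pi>\<bar> \<le> (\<integral>x. \<bar>\<theta> x * f x * jac_det \<pi> x\<bar> \<partial>lebesgue)"
    unfolding push_current_def by (rule integral_abs_bound)
  also have "\<dots> \<le> (\<integral>x. K * (\<bar>\<theta>' x\<bar> * \<bar>f x\<bar>) \<partial>lebesgue)"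
  proof (rule integral_mono_AE' [OF int])
    show "AE x in lebesgue. \<bar>\<theta> x * f x * jac_det \<pi> x\<bar> \<le> K * (\<bar>\<theta>' x\<bar> * \<bar>f x\<bar>)"
      using \<theta>'(3) by eventually_elim (simp add: pointwise)
    show "AE x in lebesgue. 0 \<le> K * (\<bar>\<theta>' x\<bar> * \<bar>f x\<bar>)"
      using \<open>0 \<le> K\<close> by simp
  qed
  also have "\<dots> = K * (\<integral>x. \<bar>\<theta>' x\<bar> * \<bar>f x\<bar> \<partial>lborel)"
    using integral_completion [OF meas] by simp
  also have "\<dots> = L_sigma \<sigma> N \<pi> ^ CARD('n) *
      (\<integral>x. \<bar>f x\<bar> \<partial>density lborel (\<lambda>x. ennreal (\<bar>\<theta>' x\<bar> * J)))"
  proof -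
    have "(\<integral>x. \<bar>f x\<bar> \<partial>density lborel (\<lambda>x. ennreal (\<bar>\<theta>' x\<bar> * J))) =
        (\<integral>x. J * (\<bar>\<theta>' x\<bar> * \<bar>f x\<bar>) \<partial>lborel)"
      by (subst integral_density) (use f \<theta>'(1) \<open>0 \<le> J\<close> in \<open>auto simp: mult_ac\<close>)
    then show ?thesis
      by (simp add: K_def mult.assoc)
  qed
  finally show ?thesis
    unfolding J_def .
qed

lemma push_current_linear:
  "linear F \<Longrightarrow> push_current \<theta> f F = det (matrix F) * (\<integral>x. \<theta> x * f x \<partial>lebesgue)"
  by (simp add: push_current_def jac_det_linear mult.commute)

lemma J_sigma_mult_abs_integral_le:
  fixes \<sigma> N \<theta> f :: "real^'n \<Rightarrow> real"
  assumes "is_norm_fn \<sigma>" "is_norm_fn N" "mass_bound N (L_sigma \<sigma> N) (push_current \<theta>) \<nu>"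
    and "\<And>x. \<bar>f x\<bar> \<le> B" "\<And>x y. \<bar>f x - f y\<bar> \<le> Lf * N (x - y)"
  shows "J_sigma \<sigma> N * \<bar>\<integral>x. \<theta> x * f x \<partial>lebesgue\<bar> \<le> (\<integral>x. \<bar>f x\<bar> \<partial>\<nu>)"
proof -
  define a where "a = \<bar>\<integral>x. \<theta> x * f x \<partial>lebesgue\<bar>"
  define b where "b = (\<integral>x. \<bar>f x\<bar> \<partial>\<nu>)"
  have "0 \<le> b"
    unfolding b_def by (rule integral_nonneg_AE) simp
  obtain c where c: "0 < c" "\<And>x. c * norm x \<le> \<sigma> x"
    using norm_fn_ge_norm [OF assms(1)] by blast
  \<comment> \<open>test the mass bound with the pairs \<open>(f, F)\<close>, where \<open>F\<close> contracts \<open>N\<close> to \<open>\<sigma>\<close>\<close>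
  have contraction_bound: "\<bar>det (matrix F)\<bar> * a \<le> b" if F: "F \<in> norm_contractions \<sigma> N" for F
  proof -
    have "linear F" "\<And>v. \<sigma> (F v) \<le> N v"
      using F by (auto simp: norm_contractions_def)
    have F_lipschitz: "norm (F x - F y) \<le> (1 / c) * N (x - y)" for x y
    proof -
      have "c * norm (F (x - y)) \<le> N (x - y)"
        using c(2) [of "F (x - y)"] \<open>\<And>v. \<sigma> (F v) \<le> N v\<close> [of "x - y"] by linarith
      with c(1) show ?thesis
        by (simp add: linear_diff [OF \<open>linear F\<close>] field_simps)
    qed
    then have "in_Dn N f F"
      unfolding in_Dn_def using assms(4,5) by blast
    with assms(3) have "\<bar>push_current \<theta> f F\<bar> \<le> L_sigma \<sigma> N F ^ CARD('n) * b"
      unfolding mass_bound_def b_def by blast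
    also have "\<dots> \<le> b"
      using L_sigma_le_1 [OF assms(1,2) F] L_sigma_nonneg [OF assms(1,2) F_lipschitz] \<open>0 \<le> b\<close>
      by (simp add: mult_left_le_one_le power_le_one)
    finally show ?thesis
      by (simp add: push_current_linear [OF \<open>linear F\<close>] a_def abs_mult)
  qed
  show ?thesis
  proof (cases "a = 0")
    case True
    with \<open>0 \<le> b\<close> show ?thesis
      by (simp add: a_def b_def)
  next
    case False
    then have "0 < a"
      by (simp add: a_def)
    with contraction_bound have "J_sigma \<sigma> N \<le> b / a"
      by (intro J_sigma_le [OF assms(1,2)]) (simp add: pos_le_divide_eq)
    with \<open>0 < a\<close> show ?thesis
      by (simp add: a_def b_def pos_le_divide_eq mult.commute)
  qed
qed

lemma lipschitz_on_min_infdist: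
  fixes A :: "'a::metric_space set"
  assumes "0 < \<delta>"
  shows "(1 / \<delta>)-lipschitz_on UNIV (\<lambda>x. min 1 (infdist x A / \<delta>))"
proof (rule lipschitz_onI)
  fix x y :: 'a
  have "\<bar>min 1 (infdist x A / \<delta>) - min 1 (infdist y A / \<delta>)\<bar> \<le> \<bar>infdist x A / \<delta> - infdist y A / \<delta>\<bar>"
    by (simp add: min_def)
  also have "\<dots> = \<bar>infdist x A - infdist y A\<bar> / \<delta>"
    using assms by (simp add: diff_divide_distrib [symmetric])
  also have "\<dots> \<le> dist x y / \<delta>"
    using assms by (intro divide_right_mono infdist_triangle_abs) simp
  finally show "dist (min 1 (infdist x A / \<delta>)) (min 1 (infdist y A / \<delta>)) \<le> 1 / \<delta> * dist x y"
    by (simp add: dist_real_def)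
qed (use assms in simp)

lemma lipschitz_cutoff:
  fixes K U :: "'a::metric_space set"
  assumes "compact K" "open U" "K \<subseteq> U"
  obtains C and f :: "'a \<Rightarrow> real" where "C-lipschitz_on UNIV f"
    "\<And>x. 0 \<le> f x" "\<And>x. f x \<le> 1" "\<And>x. x \<in> K \<Longrightarrow> f x = 1" "\<And>x. x \<notin> U \<Longrightarrow> f x = 0"
proof (cases "K = {}")
  case True
  show thesis
    by (rule that [of 0 "\<lambda>x. 0"]) (simp_all add: lipschitz_onI True)
next
  case False
  show thesis
  proof (cases "U = UNIV")
    case True
    show thesis
      by (rule that [of 0 "\<lambda>x. 1"]) (simp_all add: lipschitz_onI True)
  next
    case False
    then have "- U \<noteq> {}" "closed (- U)"
      using assms(2) by auto
    have "continuous_on K (\<lambda>x. infdist x (- U))"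
      by (intro continuous_intros)
    then obtain x0 where "x0 \<in> K" and x0: "\<And>x. x \<in> K \<Longrightarrow> infdist x0 (- U) \<le> infdist x (- U)"
      using continuous_attains_inf [OF assms(1) \<open>K \<noteq> {}\<close>] by blast
    define \<delta> where "\<delta> = infdist x0 (- U)"
    have "x0 \<notin> - U"
      using \<open>x0 \<in> K\<close> assms(3) by blast
    then have "0 < \<delta>"
      using in_closed_iff_infdist_zero [OF \<open>closed (- U)\<close> \<open>- U \<noteq> {}\<close>, of x0] infdist_nonneg [of x0 "- U"]
      by (simp add: \<delta>_def)
    define f where "f x = min 1 (infdist x (- U) / \<delta>)" for x
    show thesis
    proof (rule that [of "1 / \<delta>" f])
      show "(1 / \<delta>)-lipschitz_on UNIV f"
        unfolding f_def by (rule lipschitz_on_min_infdist [OF \<open>0 < \<delta>\<close>])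
      show "0 \<le> f x" for x
        using \<open>0 < \<delta>\<close> by (simp add: f_def infdist_nonneg)
      show "f x \<le> 1" for x
        by (simp add: f_def)
      show "f x = 1" if "x \<in> K" for x
        using x0 [OF that] \<open>0 < \<delta>\<close> by (simp add: f_def \<delta>_def)
      show "f x = 0" if "x \<notin> U" for x
        using that by (simp add: f_def infdist_zero)
    qed
  qed
qed

lemma compact_open_approximation:
  fixes M :: "'a::{second_countable_topology, complete_space} measure"
  assumes "sets M = sets borel" "finite_measure M" "B \<in> sets borel" "0 < e"
  obtains K U where "compact K" "open U" "K \<subseteq> B" "B \<subseteq> U" "measure M (U - K) < e"
proof -
  interpret finite_measure M
    by (rule assms(2))
  have finite: "emeasure M A \<noteq> \<infinity>" for A
    by (simp add: emeasure_eq_measure)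
  have "0 < e / 2"
    using assms(4) by simp
  have "{K. K \<subseteq> B \<and> compact K} \<noteq> {}"
    by auto
  from SUP_approx_ennreal [OF \<open>0 < e / 2\<close> this inner_regular [OF assms(1) finite assms(3)] finite]
  obtain K where K: "K \<subseteq> B" "compact K" "emeasure M B < emeasure M K + ennreal (e / 2)"
    by blast
  from INF_approx_ennreal [OF \<open>0 < e / 2\<close> outer_regular [OF assms(1) finite assms(3)] finite]
  obtain U where U: "B \<subseteq> U" "open U" "emeasure M U < emeasure M B + ennreal (e / 2)"
    by blast
  have sets: "K \<in> sets M" "U \<in> sets M" "B \<in> sets M"
    using K U assms(1,3) by (simp_all add: borel_compact borel_open)
  have "measure M B < measure M K + e / 2" "measure M U < measure M B + e / 2"
    using K(3) U(3) \<open>0 < e / 2\<close> by (simp_all add: emeasure_eq_measure ennreal_plus [symmetric] ennreal_less_iff del: ennreal_plus)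
  moreover have "measure M (U - K) = measure M U - measure M K"
    using sets K(1) U(1) by (intro finite_measure_Diff) auto
  ultimately have "measure M (U - K) < e"
    by simp
  with K U show thesis
    using that by blast
qed

lemma abs_integral_indicator_diff_le:
  fixes M :: "'a measure" and g f :: "'a \<Rightarrow> real"
  assumes "integrable M g" "f \<in> borel_measurable M" "B \<in> sets M" "U - K \<in> sets M" "K \<subseteq> B" "B \<subseteq> U"
    and "\<And>x. 0 \<le> f x" "\<And>x. f x \<le> 1" "\<And>x. x \<in> K \<Longrightarrow> f x = 1" "\<And>x. x \<notin> U \<Longrightarrow> f x = 0"
  shows "\<bar>(\<integral>x. g x * indicator B x \<partial>M) - (\<integral>x. g x * f x \<partial>M)\<bar> \<le> (\<integral>x. \<bar>g x\<bar> * indicator (U - K) x \<partial>M)"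
proof -
  have "integrable M (\<lambda>x. g x * indicator B x)"
    using assms(1,3) by (rule integrable_real_mult_indicator [rotated])
  moreover have "integrable M (\<lambda>x. g x * f x)"
    by (rule integrable_mult_bounded [OF assms(1,2), of 1]) (simp add: assms(7,8) abs_le_iff)
  ultimately have "\<bar>(\<integral>x. g x * indicator B x \<partial>M) - (\<integral>x. g x * f x \<partial>M)\<bar> =
      \<bar>\<integral>x. g x * indicator B x - g x * f x \<partial>M\<bar>"
    by simp
  also have "\<dots> \<le> (\<integral>x. \<bar>g x * indicator B x - g x * f x\<bar> \<partial>M)"
    by (rule integral_abs_bound)
  also have "\<dots> \<le> (\<integral>x. \<bar>g x\<bar> * indicator (U - K) x \<partial>M)"
  proof (rule integral_mono')
    show "integrable M (\<lambda>x. \<bar>g x\<bar> * indicator (U - K) x)"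
      using assms(1,4) by (intro integrable_real_mult_indicator integrable_abs)
    fix x
    have "\<bar>indicator B x - f x\<bar> \<le> (indicator (U - K) x :: real)"
      using assms(5,6) assms(7-10) [of x] by (auto simp: indicator_def)
    then show "\<bar>g x * indicator B x - g x * f x\<bar> \<le> \<bar>g x\<bar> * indicator (U - K) x"
      by (simp add: abs_mult right_diff_distrib [symmetric] mult_left_mono)
    show "0 \<le> \<bar>g x\<bar> * indicator (U - K) x"
      by simp
  qed
  finally show ?thesis .
qed

lemma compact_open_approximation_pair:
  fixes M M' :: "'a::{second_countable_topology, complete_space} measure"
  assumes "sets M = sets borel" "finite_measure M" "sets M' = sets borel" "finite_measure M'"
    and "B \<in> sets borel" "0 < e"
  obtains K U where "compact K" "open U" "K \<subseteq> B" "B \<subseteq> U"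
    "measure M (U - K) < e" "measure M' (U - K) < e"
proof -
  interpret M: finite_measure M
    by (rule assms(2))
  interpret M': finite_measure M'
    by (rule assms(4))
  obtain K1 U1 where KU1: "compact K1" "open U1" "K1 \<subseteq> B" "B \<subseteq> U1" "measure M (U1 - K1) < e"
    by (rule compact_open_approximation [OF assms(1,2,5,6)])
  obtain K2 U2 where KU2: "compact K2" "open U2" "K2 \<subseteq> B" "B \<subseteq> U2" "measure M' (U2 - K2) < e"
    by (rule compact_open_approximation [OF assms(3,4,5,6)])
  have "measure M ((U1 \<inter> U2) - (K1 \<union> K2)) \<le> measure M (U1 - K1)"
    using KU1(1,2) assms(1) by (intro M.finite_measure_mono) (auto simp: borel_open borel_compact sets.Diff)
  moreover have "measure M' ((U1 \<inter> U2) - (K1 \<union> K2)) \<le> measure M' (U2 - K2)"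
    using KU2(1,2) assms(3) by (intro M'.finite_measure_mono) (auto simp: borel_open borel_compact sets.Diff)
  ultimately show thesis
    using KU1 KU2 by (intro that [of "K1 \<union> K2" "U1 \<inter> U2"]) (auto simp: compact_Un open_Int)
qed

lemma integral_abs_le_measure:
  fixes f :: "'a \<Rightarrow> real"
  assumes "finite_measure M" "U \<in> sets M" "\<And>x. \<bar>f x\<bar> \<le> 1" "\<And>x. x \<notin> U \<Longrightarrow> f x = 0"
  shows "(\<integral>x. \<bar>f x\<bar> \<partial>M) \<le> measure M U"
proof -
  interpret finite_measure M
    by (rule assms(1))
  have "(\<integral>x. \<bar>f x\<bar> \<partial>M) \<le> (\<integral>x. indicator U x \<partial>M)"
  proof (rule integral_mono')
    show "integrable M (indicator U :: _ \<Rightarrow> real)"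
      using assms(2) by (simp add: integrable_indicator_iff sets.Int_space_eq2 emeasure_eq_measure)
    show "\<bar>f x\<bar> \<le> indicator U x" for x
      using assms(3,4) [of x] by (cases "x \<in> U") auto
  qed simp
  also have "\<dots> = measure M U"
    using assms(2) by (simp add: sets.Int_space_eq2)
  finally show ?thesis .
qed

lemma finite_measure_density_lborel:
  fixes g :: "'a::euclidean_space \<Rightarrow> real"
  assumes "integrable lborel g" "\<And>x. 0 \<le> g x"
  shows "finite_measure (density lborel (\<lambda>x. ennreal (g x)))"
proof (rule finite_measureI)
  have "(\<integral>\<^sup>+x. ennreal (norm (g x)) \<partial>lborel) < \<infinity>"
    using assms(1) unfolding integrable_iff_bounded by blast
  then show "emeasure (density lborel (\<lambda>x. ennreal (g x))) (space (density lborel (\<lambda>x. ennreal (g x)))) \<noteq> \<infinity>"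
    using borel_measurable_integrable [OF assms(1)] by (simp add: emeasure_density assms(2))
qed

lemma measure_density_lborel:
  fixes g :: "'a::euclidean_space \<Rightarrow> real"
  assumes "integrable lborel g" "\<And>x. 0 \<le> g x" "X \<in> sets borel"
  shows "measure (density lborel (\<lambda>x. ennreal (g x))) X = (\<integral>x. g x * indicator X x \<partial>lborel)"
proof -
  have "(\<integral>x. indicator X x \<partial>density lborel (\<lambda>x. ennreal (g x))) = (\<integral>x. g x * indicator X x \<partial>lborel)"
    by (subst integral_density) (use borel_measurable_integrable [OF assms(1)] assms(2,3) in auto)
  then show ?thesis
    by simp
qed

lemma J_sigma_mult_abs_integral_lipschitz_le:
  fixes \<sigma> N \<theta> \<theta>' f :: "real^'n \<Rightarrow> real"
  assumes "is_norm_fn \<sigma>" "is_norm_fn N" "mass_bound N (L_sigma \<sigma> N) (push_current \<theta>) \<nu>"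
    and "integrable lebesgue \<theta>" "\<theta>' \<in> borel_measurable lborel" "AE x in lebesgue. \<theta> x = \<theta>' x"
    and "C-lipschitz_on UNIV f" "\<And>x. \<bar>f x\<bar> \<le> B"
  shows "J_sigma \<sigma> N * \<bar>\<integral>x. \<theta>' x * f x \<partial>lborel\<bar> \<le> (\<integral>x. \<bar>f x\<bar> \<partial>\<nu>)"
proof -
  obtain Lf where Lf: "\<And>x y. norm (f x - f y) \<le> Lf * N (x - y)"
    using norm_fn_lipschitz_if_lipschitz_on [OF assms(2,7)] by blast
  have f: "f \<in> borel_measurable lborel"
    by (rule borel_measurable_lipschitz_on [OF assms(7)])
  have "(\<lambda>x. \<theta>' x * f x) \<in> borel_measurable lborel"
    using assms(5) f by measurable
  have "(\<integral>x. \<theta> x * f x \<partial>lebesgue) = (\<integral>x. \<theta>' x * f x \<partial>lebesgue)"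
    using borel_measurable_integrable [OF assms(4)] measurable_completion [OF f]
      measurable_completion [OF assms(5)] assms(6)
    by (intro integral_cong_AE) auto
  also have "\<dots> = (\<integral>x. \<theta>' x * f x \<partial>lborel)"
    by (rule integral_completion) fact
  finally have "(\<integral>x. \<theta> x * f x \<partial>lebesgue) = (\<integral>x. \<theta>' x * f x \<partial>lborel)" .
  moreover have "J_sigma \<sigma> N * \<bar>\<integral>x. \<theta> x * f x \<partial>lebesgue\<bar> \<le> (\<integral>x. \<bar>f x\<bar> \<partial>\<nu>)"
    using Lf by (intro J_sigma_mult_abs_integral_le [OF assms(1-3) assms(8)]) simp
  ultimately show ?thesis
    by simp
qed

lemma J_sigma_mult_abs_set_integral_le:
  fixes \<sigma> N \<theta> \<theta>' :: "real^'n \<Rightarrow> real" and \<nu> :: "(real^'n) measure"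
  assumes "is_norm_fn \<sigma>" "is_norm_fn N" "mass_bound N (L_sigma \<sigma> N) (push_current \<theta>) \<nu>"
    and "integrable lebesgue \<theta>"
    and \<theta>': "\<theta>' \<in> borel_measurable lborel" "integrable lborel \<theta>'" "AE x in lebesgue. \<theta> x = \<theta>' x"
    and B: "B \<in> sets borel"
  shows "J_sigma \<sigma> N * \<bar>\<integral>x. \<theta>' x * indicator B x \<partial>lborel\<bar> \<le> measure \<nu> B"
proof -
  define J where "J = J_sigma \<sigma> N"
  have "0 \<le> J"
    unfolding J_def by (rule J_sigma_nonneg [OF assms(1,2)])
  have \<nu>: "sets \<nu> = sets borel" "finite_measure \<nu>"
    using assms(3) unfolding mass_bound_def by auto
  define M where "M = density lborel (\<lambda>x. ennreal \<bar>\<theta>' x\<bar>)"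
  have M: "sets M = sets borel" "finite_measure M"
    using finite_measure_density_lborel [of "\<lambda>x. \<bar>\<theta>' x\<bar>"] \<theta>'(2) by (simp_all add: M_def)
  show ?thesis
    unfolding J_def [symmetric]
  proof (rule le_if_le_add_mult_epsilon)
    show "0 \<le> 1 + J"
      using \<open>0 \<le> J\<close> by simp
    fix \<epsilon> :: real
    assume "0 < \<epsilon>"
    \<comment> \<open>approximate the indicator of \<open>B\<close> by a Lipschitz cutoff, for \<open>\<nu>\<close> and \<open>M\<close> at once\<close>
    obtain K U where KU: "compact K" "open U" "K \<subseteq> B" "B \<subseteq> U"
      "measure \<nu> (U - K) < \<epsilon>" "measure M (U - K) < \<epsilon>"
      by (rule compact_open_approximation_pair [OF \<nu> M B \<open>0 < \<epsilon>\<close>])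
    have UK: "U - K \<in> sets borel"
      using KU(1,2) by (simp add: borel_open borel_compact sets.Diff)
    obtain C and f :: "real^'n \<Rightarrow> real" where f: "C-lipschitz_on UNIV f" "\<And>x. 0 \<le> f x" "\<And>x. f x \<le> 1"
        "\<And>x. x \<in> K \<Longrightarrow> f x = 1" "\<And>x. x \<notin> U \<Longrightarrow> f x = 0"
      using lipschitz_cutoff [OF KU(1,2) order_trans [OF KU(3,4)]] by metis
    have f_bound: "\<bar>f x\<bar> \<le> 1" for x
      using f(2,3) [of x] by simp
    have test: "J * \<bar>\<integral>x. \<theta>' x * f x \<partial>lborel\<bar> \<le> (\<integral>x. \<bar>f x\<bar> \<partial>\<nu>)"
      unfolding J_def by (rule J_sigma_mult_abs_integral_lipschitz_le [OF assms(1-4) \<theta>'(1,3) f(1) f_bound])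
    have "\<bar>(\<integral>x. \<theta>' x * indicator B x \<partial>lborel) - (\<integral>x. \<theta>' x * f x \<partial>lborel)\<bar> \<le> measure M (U - K)"
      using abs_integral_indicator_diff_le [OF \<theta>'(2) borel_measurable_lipschitz_on [OF f(1)] _ _ KU(3,4) f(2-5)]
        B UK measure_density_lborel [of "\<lambda>x. \<bar>\<theta>' x\<bar>" "U - K"] \<theta>'(2)
      by (simp add: M_def)
    with KU(6) have approx: "\<bar>(\<integral>x. \<theta>' x * indicator B x \<partial>lborel) - (\<integral>x. \<theta>' x * f x \<partial>lborel)\<bar> \<le> \<epsilon>"
      by simp
    have "(\<integral>x. \<bar>f x\<bar> \<partial>\<nu>) \<le> measure \<nu> U"
      using KU(2) \<nu>(1) by (intro integral_abs_le_measure [OF \<nu>(2) _ f_bound f(5)]) (simp add: borel_open)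
    also have "\<dots> \<le> measure \<nu> (B \<union> (U - K))"
      using KU(3) B UK \<nu>(1) by (intro finite_measure.finite_measure_mono [OF \<nu>(2)]) auto
    also have "\<dots> \<le> measure \<nu> B + measure \<nu> (U - K)"
      using B UK \<nu>(1) by (intro measure_Un_le) auto
    finally have mass: "(\<integral>x. \<bar>f x\<bar> \<partial>\<nu>) \<le> measure \<nu> B + \<epsilon>"
      using KU(5) by simp
    have "J * \<bar>\<integral>x. \<theta>' x * indicator B x \<partial>lborel\<bar> \<le> J * \<bar>\<integral>x. \<theta>' x * f x \<partial>lborel\<bar> + J * \<epsilon>"
      using mult_left_mono [OF _ \<open>0 \<le> J\<close>] approx by (simp add: distrib_left [symmetric])
    with test mass show "J * \<bar>\<integral>x. \<theta>' x * indicator B x \<partial>lborel\<bar> \<le> measure \<nu> B + (1 + J) * \<epsilon>"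
      by (simp add: algebra_simps)
  qed
qed

lemma mass_bound_density:
  fixes \<sigma> N \<theta> \<theta>' :: "real^'n \<Rightarrow> real"
  assumes "is_norm_fn \<sigma>" "is_norm_fn N"
    and \<theta>': "\<theta>' \<in> borel_measurable lborel" "integrable lborel \<theta>'" "AE x in lebesgue. \<theta> x = \<theta>' x"
  shows "mass_bound N (L_sigma \<sigma> N) (push_current \<theta>)
      (density lborel (\<lambda>x. ennreal (\<bar>\<theta>' x\<bar> * J_sigma \<sigma> N)))"
  unfolding mass_bound_def
proof (intro conjI allI impI)
  show "sets (density lborel (\<lambda>x. ennreal (\<bar>\<theta>' x\<bar> * J_sigma \<sigma> N))) = sets borel"
    by simp
  have "0 \<le> J_sigma \<sigma> N"
    by (rule J_sigma_nonneg [OF assms(1,2)])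
  show "finite_measure (density lborel (\<lambda>x. ennreal (\<bar>\<theta>' x\<bar> * J_sigma \<sigma> N)))"
    using \<theta>'(2) \<open>0 \<le> J_sigma \<sigma> N\<close>
    by (intro finite_measure_density_lborel integrable_mult_left integrable_abs) simp_all
next
  fix f \<pi>
  assume "in_Dn N f \<pi>"
  then show "\<bar>push_current \<theta> f \<pi>\<bar> \<le> L_sigma \<sigma> N \<pi> ^ CARD('n) *
      (\<integral>x. \<bar>f x\<bar> \<partial>density lborel (\<lambda>x. ennreal (\<bar>\<theta>' x\<bar> * J_sigma \<sigma> N)))"
    by (rule abs_push_current_le [OF assms])
qed

lemma integral_abs_mult_J_sigma_indicator_le:
  fixes \<sigma> N \<theta> \<theta>' :: "real^'n \<Rightarrow> real" and \<nu> :: "(real^'n) measure"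
  assumes "is_norm_fn \<sigma>" "is_norm_fn N" "mass_bound N (L_sigma \<sigma> N) (push_current \<theta>) \<nu>"
    and "integrable lebesgue \<theta>"
    and \<theta>': "\<theta>' \<in> borel_measurable lborel" "integrable lborel \<theta>'" "AE x in lebesgue. \<theta> x = \<theta>' x"
    and A: "A \<in> sets borel"
  shows "(\<integral>x. \<bar>\<theta>' x\<bar> * J_sigma \<sigma> N * indicator A x \<partial>lborel) \<le> measure \<nu> A"
proof -
  define J where "J = J_sigma \<sigma> N"
  have "0 \<le> J"
    unfolding J_def by (rule J_sigma_nonneg [OF assms(1,2)])
  have \<nu>: "sets \<nu> = sets borel" "finite_measure \<nu>"
    using assms(3) unfolding mass_bound_def by auto
  interpret \<nu>: finite_measure \<nu>
    by (rule \<nu>(2))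
  define P where "P = A \<inter> {x. 0 < \<theta>' x}"
  define Q where "Q = A \<inter> {x. \<theta>' x < 0}"
  have PQ: "P \<in> sets borel" "Q \<in> sets borel"
    unfolding P_def Q_def using A \<theta>'(1) by measurable
  have integrable: "integrable lborel (\<lambda>x. \<theta>' x * indicator X x)" if "X \<in> sets borel" for X
    using that \<theta>'(2) by (intro integrable_real_mult_indicator) auto
  have "(\<integral>x. \<bar>\<theta>' x\<bar> * J * indicator A x \<partial>lborel) =
      (\<integral>x. J * (\<theta>' x * indicator P x - \<theta>' x * indicator Q x) \<partial>lborel)"
    by (rule Bochner_Integration.integral_cong) (auto simp: P_def Q_def indicator_def)
  also have "\<dots> = J * ((\<integral>x. \<theta>' x * indicator P x \<partial>lborel) - (\<integral>x. \<theta>' x * indicator Q x \<partial>lborel))"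
    using integrable [OF PQ(1)] integrable [OF PQ(2)] by simp
  also have "\<dots> \<le> J * \<bar>\<integral>x. \<theta>' x * indicator P x \<partial>lborel\<bar> + J * \<bar>\<integral>x. \<theta>' x * indicator Q x \<partial>lborel\<bar>"
    using \<open>0 \<le> J\<close> by (simp add: distrib_left [symmetric] mult_left_mono)
  also have "\<dots> \<le> measure \<nu> P + measure \<nu> Q"
    unfolding J_def using J_sigma_mult_abs_set_integral_le [OF assms(1-4) \<theta>'] PQ by (intro add_mono)
  also have "\<dots> = measure \<nu> (P \<union> Q)"
    using PQ \<nu>(1) by (intro \<nu>.finite_measure_Union [symmetric]) (auto simp: P_def Q_def)
  also have "\<dots> \<le> measure \<nu> A"
    using A \<nu>(1) by (intro \<nu>.finite_measure_mono) (auto simp: P_def Q_def)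
  finally show ?thesis
    unfolding J_def .
qed

lemma density_le_mass_bound:
  fixes \<sigma> N \<theta> \<theta>' :: "real^'n \<Rightarrow> real" and \<nu> :: "(real^'n) measure"
  assumes "is_norm_fn \<sigma>" "is_norm_fn N" "mass_bound N (L_sigma \<sigma> N) (push_current \<theta>) \<nu>"
    and "integrable lebesgue \<theta>"
    and \<theta>': "\<theta>' \<in> borel_measurable lborel" "integrable lborel \<theta>'" "AE x in lebesgue. \<theta> x = \<theta>' x"
    and A: "A \<in> sets borel"
  shows "emeasure (density lborel (\<lambda>x. ennreal (\<bar>\<theta>' x\<bar> * J_sigma \<sigma> N))) A \<le> emeasure \<nu> A"
proof -
  have density: "integrable lborel (\<lambda>x. \<bar>\<theta>' x\<bar> * J_sigma \<sigma> N)" "\<And>x. 0 \<le> \<bar>\<theta>' x\<bar> * J_sigma \<sigma> N"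
    using \<theta>'(2) J_sigma_nonneg [OF assms(1,2)] by (auto intro: integrable_mult_left integrable_abs)
  have "emeasure (density lborel (\<lambda>x. ennreal (\<bar>\<theta>' x\<bar> * J_sigma \<sigma> N))) A =
      ennreal (measure (density lborel (\<lambda>x. ennreal (\<bar>\<theta>' x\<bar> * J_sigma \<sigma> N))) A)"
    by (rule finite_measure.emeasure_eq_measure [OF finite_measure_density_lborel [OF density]])
  also have "\<dots> = ennreal (\<integral>x. \<bar>\<theta>' x\<bar> * J_sigma \<sigma> N * indicator A x \<partial>lborel)"
    by (simp only: measure_density_lborel [OF density A])
  also have "\<dots> \<le> ennreal (measure \<nu> A)"
    using integral_abs_mult_J_sigma_indicator_le [OF assms] by (rule ennreal_leI)
  also have "\<dots> = emeasure \<nu> A"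
    using assms(3) unfolding mass_bound_def by (simp add: finite_measure.emeasure_eq_measure)
  finally show ?thesis .
qed

theorem lemma5p2:
  fixes \<sigma> N :: "real^'n \<Rightarrow> real" and \<theta> :: "real^'n \<Rightarrow> real"
  assumes "is_norm_fn \<sigma>" and "is_norm_fn N"
    and "integrable lebesgue \<theta>"
  shows "\<exists>\<mu>. is_mass N (L_sigma \<sigma> N) (push_current \<theta>) \<mu> \<and>
           (\<forall>A\<in>sets borel. emeasure \<mu> A =
              (\<integral>\<^sup>+ x. ennreal (\<bar>\<theta> x\<bar> * J_sigma \<sigma> N) * indicator A x \<partial>lebesgue))"
proof -
  obtain \<theta>' where \<theta>': "\<theta>' \<in> borel_measurable lborel" "integrable lborel \<theta>'"
    "AE x in lebesgue. \<theta> x = \<theta>' x"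
    using borel_representative [OF assms(3)] by blast
  define \<mu> where "\<mu> = density lborel (\<lambda>x. ennreal (\<bar>\<theta>' x\<bar> * J_sigma \<sigma> N))"
  have "is_mass N (L_sigma \<sigma> N) (push_current \<theta>) \<mu>"
    unfolding is_mass_def \<mu>_def
    using mass_bound_density [OF assms(1,2) \<theta>'] density_le_mass_bound [OF assms(1,2) _ assms(3) \<theta>']
    by blast
  moreover have "emeasure \<mu> A = (\<integral>\<^sup>+ x. ennreal (\<bar>\<theta> x\<bar> * J_sigma \<sigma> N) * indicator A x \<partial>lebesgue)"
    if "A \<in> sets borel" for A
  proof -
    have "emeasure \<mu> A = (\<integral>\<^sup>+ x. ennreal (\<bar>\<theta>' x\<bar> * J_sigma \<sigma> N) * indicator A x \<partial>lborel)"
      unfolding \<mu>_def using that \<theta>'(1) by (subst emeasure_density) auto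
    also have "\<dots> = (\<integral>\<^sup>+ x. ennreal (\<bar>\<theta>' x\<bar> * J_sigma \<sigma> N) * indicator A x \<partial>lebesgue)"
      by (rule nn_integral_completion [symmetric])
    also have "\<dots> = (\<integral>\<^sup>+ x. ennreal (\<bar>\<theta> x\<bar> * J_sigma \<sigma> N) * indicator A x \<partial>lebesgue)"
      using \<theta>'(3) by (intro nn_integral_cong_AE) auto
    finally show ?thesis .
  qed
  ultimately show ?thesis
    by blast
qed

end
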